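(* There is an absolute constant $c>0$ such that for every $n\ge 1$ and $N=2^n$ there is a 2D SLP with at most $c\cdot n$ nonterminals deriving $\mathsf{ShiftBin}_N$.
   Context: Alphabet $\Sigma\supseteq\{0,1,\$\}$. A 2D string of size $p\times q$ is a $p\times q$ array over $\Sigma$. For $N=2^n$, $\mathsf{Bin}_N$ is the $N\times(n+2)$ 2D string whose $i$-th row ($i\in[1..N]$) is $\$\,b_{i-1}\,\$$, where $b_{i-1}$ is the $n$-bit binary representation of $i-1$. $\mathsf{ShiftBin}_N$ is the $2N\times N(n+2)$ 2D string such that for each $j\in[1..N]$, the subarray formed by rows $j,\dots,j+N-1$ and columns $(j-1)(n+2)+1,\dots,j(n+2)$ equals $\mathsf{Bin}_N$ (i.e., the $j$-th copy of $\mathsf{Bin}_N$ shifted down by $j-1$ rows), and all other entries are $0$. A 2D SLP is a triple $(\mathcal V,\mathcal S,\rho)$: a finite set $\mathcal V$ of nonterminals each with a dimension (height, width), a starting nonterminal $\mathcal S$, and for each $X\in\mathcal V$ a production $\rho(X)$ which is a character $\sigma\in\Sigma$ ($X$ of size $1\times1$), or a horizontal concatenation $Y\oplus_{\mathrm h}Z$ ($Y$ and $Z$ of equal height, $Z$ placed to the right of $Y$), or a vertical concatenation $Y\oplus_{\mathrm v}Z$ ($Y,Z$ of equal width, $Z$ placed below $Y$), with $Y,Z\in\mathcal V$ and the occurrence relation acyclic; it derives the 2D string $\exp(\mathcal S)$ obtained by recursive expansion. *)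

theory Defs
  imports Complex_Main
begin

text \<open>Alphabet: the three relevant characters 0, 1 and the separator.\<close>
datatype sym = S0 | S1 | SD

text \<open>2D strings are lists of rows (row-major); a p x q string is a list of p rows each of length q.\<close>
type_synonym str2d = "sym list list"

text \<open>Productions of a 2D SLP. Nonterminals are the indices 0..length-1 of a rule list;
  acyclicity is enforced by requiring right-hand sides to refer to smaller indices.\<close>
datatype rule = Leaf sym | HCat nat nat | VCat nat nat

function expand :: "rule list \<Rightarrow> nat \<Rightarrow> str2d option" where
  "expand rs i =
     (if i < length rs then
        (case rs ! i of
           Leaf c \<Rightarrow> Some [[c]]
         | HCat j k \<Rightarrow>
             (if j < i \<and> k < i then
                (case (expand rs j, expand rs k) of
                   (Some A, Some B) \<Rightarrow>
                     (if length A = length B then Some (map2 (@) A B) else None)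
                 | _ \<Rightarrow> None)
              else None)
         | VCat j k \<Rightarrow>
             (if j < i \<and> k < i then
                (case (expand rs j, expand rs k) of
                   (Some A, Some B) \<Rightarrow>
                     (if length (hd A) = length (hd B) then Some (A @ B) else None)
                 | _ \<Rightarrow> None)
              else None))
      else None)"
  by pat_completeness auto
termination by (relation "measure snd") auto

text \<open>n-bit binary representation of m, most significant bit first.\<close>
definition bits :: "nat \<Rightarrow> nat \<Rightarrow> sym list" where
  "bits n m = map (\<lambda>k. if bit m (n - 1 - k) then S1 else S0) [0..<n]"

text \<open>Row a (0-based) of Bin_N, N = 2^n.\<close>
definition binrow :: "nat \<Rightarrow> nat \<Rightarrow> sym list" where
  "binrow n a = [SD] @ bits n a @ [SD]"

definition Bin :: "nat \<Rightarrow> str2d" where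
  "Bin n = map (binrow n) [0..<2^n]"

text \<open>ShiftBin_N, 0-based: entry (r,c) lies in copy j = c div (n+2); it equals the Bin entry
  at row r - j, column c mod (n+2) when j \<le> r < j + N, and 0 otherwise.\<close>
definition ShiftBin :: "nat \<Rightarrow> str2d" where
  "ShiftBin n =
     map (\<lambda>r. map (\<lambda>c. let j = c div (n + 2); t = c mod (n + 2) in
                         if j \<le> r \<and> r < j + 2^n then binrow n (r - j) ! t else S0)
               [0..<2^n * (n + 2)])
         [0..<2 * 2^n]"

end

theory Submission
  imports Defs
begin

(* Both ShiftBin_N and Bin_N are produced by repeated doubling, each doubling costing a
   constant number of productions.  Let X_k be the top (N + 2^k) x 2^k (n+2) part of
   ShiftBin_N, which contains the first 2^k copies of Bin_N, and let Z_k be the zero block of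
   size 2^k x 2^k (n+2).  Since ShiftBin_N is invariant under moving 2^k copies to the right
   and 2^k rows down, X_(k+1) is X_k above Z_k, placed left of Z_k above X_k; and X_n is
   ShiftBin_N.  Likewise Bin_N without its first column doubles in height: rows r < 2^k of
   the next stage start with 0, the others with 1, followed by the bits of r mod 2^k. *)

declare expand.simps [simp del]

lemma expand_append: "i < length rs \<Longrightarrow> expand (rs @ ts) i = expand rs i"
proof (induction i rule: less_induct)
  case (less i)
  then show ?case
    by (subst (1 2) expand.simps) (auto simp: nth_append split: rule.split option.split)
qed

definition derives :: "rule list \<Rightarrow> str2d \<Rightarrow> bool" where
  "derives rs A \<longleftrightarrow> (\<exists>i < length rs. expand rs i = Some A)"

lemma derives_append: "derives rs A \<Longrightarrow> derives (rs @ ts) A"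
  unfolding derives_def by (auto simp: expand_append intro: trans_less_add1)

lemma expand_snoc_Leaf: "expand (rs @ [Leaf c]) (length rs) = Some [[c]]"
  by (subst expand.simps) simp

lemma expand_snoc_HCat:
  assumes "i < length rs" "expand rs i = Some A" "j < length rs" "expand rs j = Some B"
    and "length A = length B"
  shows "expand (rs @ [HCat i j]) (length rs) = Some (map2 (@) A B)"
  using assms by (subst expand.simps) (simp add: expand_append)

lemma expand_snoc_VCat:
  assumes "i < length rs" "expand rs i = Some A" "j < length rs" "expand rs j = Some B"
    and "length (hd A) = length (hd B)"
  shows "expand (rs @ [VCat i j]) (length rs) = Some (A @ B)"
  using assms by (subst expand.simps) (simp add: expand_append)

(* Constructions are composed through this relation, so that nonterminal
   indices never have to be tracked explicitly. *)
definition builds :: "str2d set \<Rightarrow> nat \<Rightarrow> str2d set \<Rightarrow> bool" where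
  "builds S k T \<longleftrightarrow>
     (\<forall>rs. (\<forall>A \<in> S. derives rs A) \<longrightarrow>
        (\<exists>ts. length ts \<le> k \<and> (\<forall>B \<in> T. derives (rs @ ts) B)))"

lemma builds_trans [trans]:
  assumes "builds S k T" and "builds T l U"
  shows "builds S (k + l) U"
  unfolding builds_def
proof (intro allI impI)
  fix rs assume "\<forall>A \<in> S. derives rs A"
  with assms(1) obtain ts where "length ts \<le> k" "\<forall>B \<in> T. derives (rs @ ts) B"
    unfolding builds_def by blast
  moreover from this(2) assms(2) obtain us where "length us \<le> l" "\<forall>C \<in> U. derives (rs @ ts @ us) C"
    unfolding builds_def by (metis append.assoc)
  ultimately show "\<exists>vs. length vs \<le> k + l \<and> (\<forall>C \<in> U. derives (rs @ vs) C)"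
    by (intro exI[of _ "ts @ us"]) simp
qed

lemma builds_mono:
  assumes "builds S k T" "S \<subseteq> S'" "T' \<subseteq> T" "k \<le> k'"
  shows "builds S' k' T'"
  using assms unfolding builds_def by (meson order_trans subsetD)

lemma builds_par:
  assumes "builds S k T" and "builds S' k' T'"
  shows "builds (S \<union> S') (k + k') (T \<union> T')"
  unfolding builds_def
proof (intro allI impI)
  fix rs assume derived: "\<forall>A \<in> S \<union> S'. derives rs A"
  with assms(1) obtain ts where "length ts \<le> k" "\<forall>B \<in> T. derives (rs @ ts) B"
    unfolding builds_def by auto
  moreover from derived have "\<forall>A \<in> S'. derives (rs @ ts) A"
    by (simp add: derives_append)
  with assms(2) obtain us where "length us \<le> k'" "\<forall>B \<in> T'. derives (rs @ ts @ us) B"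
    unfolding builds_def by (metis append.assoc)
  ultimately show "\<exists>vs. length vs \<le> k + k' \<and> (\<forall>B \<in> T \<union> T'. derives (rs @ vs) B)"
    by (intro exI[of _ "ts @ us"]) (auto simp: derives_append[of "rs @ ts", simplified])
qed

lemma builds_iterate:
  assumes "\<And>k. builds (P k) c (P (Suc k))"
  shows "builds (P 0) (c * m) (P m)"
proof (induction m)
  case 0
  show ?case unfolding builds_def by (auto intro: exI[of _ "[]"])
next
  case (Suc m)
  from builds_trans[OF this assms] show ?case by (simp add: add.commute)
qed

lemma builds_snoc:
  assumes "\<And>rs. \<forall>A \<in> S. derives rs A \<Longrightarrow> \<exists>x. derives (rs @ [x]) B"
  shows "builds S 1 (insert B S)"
  unfolding builds_def
proof (intro allI impI)
  fix rs assume "\<forall>A \<in> S. derives rs A"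
  with assms obtain x where "derives (rs @ [x]) B" by blast
  with \<open>\<forall>A \<in> S. derives rs A\<close>
  show "\<exists>ts. length ts \<le> 1 \<and> (\<forall>C \<in> insert B S. derives (rs @ ts) C)"
    by (intro exI[of _ "[x]"]) (simp add: derives_append)
qed

lemma builds_leaf: "builds S 1 (insert [[c]] S)"
proof (rule builds_snoc)
  fix rs :: "rule list"
  have "derives (rs @ [Leaf c]) [[c]]"
    unfolding derives_def using expand_snoc_Leaf[of rs c] by (intro exI[of _ "length rs"]) simp
  then show "\<exists>x. derives (rs @ [x]) [[c]]" ..
qed

lemma builds_hcat:
  assumes "A \<in> S" "B \<in> S" "length A = length B"
  shows "builds S 1 (insert (map2 (@) A B) S)"
proof (rule builds_snoc)
  fix rs assume "\<forall>A \<in> S. derives rs A"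
  with assms obtain i j
    where "i < length rs" "expand rs i = Some A" "j < length rs" "expand rs j = Some B"
    unfolding derives_def by blast
  with assms(3) have "derives (rs @ [HCat i j]) (map2 (@) A B)"
    unfolding derives_def by (auto intro!: exI[of _ "length rs"] expand_snoc_HCat)
  then show "\<exists>x. derives (rs @ [x]) (map2 (@) A B)" ..
qed

lemma builds_vcat:
  assumes "A \<in> S" "B \<in> S" "length (hd A) = length (hd B)"
  shows "builds S 1 (insert (A @ B) S)"
proof (rule builds_snoc)
  fix rs assume "\<forall>A \<in> S. derives rs A"
  with assms obtain i j
    where "i < length rs" "expand rs i = Some A" "j < length rs" "expand rs j = Some B"
    unfolding derives_def by blast
  with assms(3) have "derives (rs @ [VCat i j]) (A @ B)"
    unfolding derives_def by (auto intro!: exI[of _ "length rs"] expand_snoc_VCat)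
  then show "\<exists>x. derives (rs @ [x]) (A @ B)" ..
qed

lemma builds_from_empty:
  assumes "builds {} k {A}"
  obtains rs S where "S < length rs" "expand rs S = Some A" "length rs \<le> k"
proof -
  from assms[unfolded builds_def, THEN spec[of _ "[]"]]
  obtain ts where "length ts \<le> k" "derives ts A"
    by auto
  then show thesis using that unfolding derives_def by blast
qed

definition grid :: "nat \<Rightarrow> nat \<Rightarrow> (nat \<Rightarrow> nat \<Rightarrow> sym) \<Rightarrow> str2d" where
  "grid h w f = map (\<lambda>r. map (f r) [0..<w]) [0..<h]"

abbreviation const_grid :: "nat \<Rightarrow> nat \<Rightarrow> sym \<Rightarrow> str2d" where
  "const_grid h w s \<equiv> grid h w (\<lambda>_ _. s)"

lemma length_grid [simp]: "length (grid h w f) = h"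
  by (simp add: grid_def)

lemma length_hd_grid [simp]: "0 < h \<Longrightarrow> length (hd (grid h w f)) = w"
  by (simp add: grid_def hd_map)

lemma grid_eqI:
  "h = h' \<Longrightarrow> w = w' \<Longrightarrow> (\<And>r c. r < h \<Longrightarrow> c < w \<Longrightarrow> f r c = g r c) \<Longrightarrow>
    grid h w f = grid h' w' g"
  by (simp add: grid_def)

lemma grid_hcat:
  "map2 (@) (grid h w1 f) (grid h w2 g) =
     grid h (w1 + w2) (\<lambda>r c. if c < w1 then f r c else g r (c - w1))"
  by (auto simp: grid_def nth_append intro!: nth_equalityI)

lemma grid_vcat:
  "grid h1 w f @ grid h2 w g = grid (h1 + h2) w (\<lambda>r c. if r < h1 then f r c else g (r - h1) c)"
  by (auto simp: grid_def nth_append intro!: nth_equalityI)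

lemma grid_rows:
  "(\<And>r. r < h \<Longrightarrow> length (xs r) = w) \<Longrightarrow> grid h w (\<lambda>r c. xs r ! c) = map xs [0..<h]"
  by (auto simp: grid_def intro!: nth_equalityI)

lemma const_grid_hcat: "map2 (@) (const_grid h w1 s) (const_grid h w2 s) = const_grid h (w1 + w2) s"
  by (simp add: grid_hcat)

lemma const_grid_vcat: "const_grid h1 w s @ const_grid h2 w s = const_grid (h1 + h2) w s"
  by (simp add: grid_vcat)

lemma bits_Suc: "bits (Suc k) r = (if bit r k then S1 else S0) # bits k r"
  by (simp add: bits_def upt_conv_Cons del: upt_Suc flip: map_Suc_upt)

lemma bits_take_bit: "bits k (take_bit k r) = bits k r"
  by (auto simp: bits_def bit_take_bit_iff)

lemma bits_Suc_div_mod: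
  "bits (Suc k) r = (if odd (r div 2 ^ k) then S1 else S0) # bits k (r mod 2 ^ k)"
  by (simp add: bits_Suc bits_take_bit bit_iff_odd flip: take_bit_eq_mod)

definition bits_block :: "nat \<Rightarrow> str2d" where
  "bits_block k = grid (2 ^ k) (Suc k) (\<lambda>r c. (bits k r @ [SD]) ! c)"

lemma bits_block_0: "bits_block 0 = [[SD]]"
  by (simp add: bits_block_def bits_def grid_def)

lemma bits_block_Suc:
  "bits_block (Suc k) =
     map2 (@) (const_grid (2 ^ k) 1 S0) (bits_block k) @
     map2 (@) (const_grid (2 ^ k) 1 S1) (bits_block k)"
proof -
  have rows: "(bits (Suc k) r @ [SD]) ! c =
      (if r < 2 ^ k then if c < 1 then S0 else (bits k r @ [SD]) ! (c - 1)
       else if c < 1 then S1 else (bits k (r - 2 ^ k) @ [SD]) ! (c - 1))"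
    if "r < 2 ^ k + 2 ^ k" for r c
    using that by (auto simp: bits_Suc_div_mod nth_Cons' le_div_geq le_mod_geq)
  show ?thesis
    unfolding bits_block_def grid_hcat grid_vcat
    by (rule grid_eqI) (simp_all add: rows)
qed

lemma Bin_grid: "Bin n = grid (2 ^ n) (n + 2) (\<lambda>r c. binrow n r ! c)"
  by (simp add: Bin_def grid_rows binrow_def bits_def)

lemma Bin_eq_hcat: "Bin n = map2 (@) (const_grid (2 ^ n) 1 SD) (bits_block n)"
proof -
  have "Bin n = grid (2 ^ n) (1 + Suc n) (\<lambda>r c. binrow n r ! c)"
    by (simp add: Bin_grid)
  also have "\<dots> = map2 (@) (const_grid (2 ^ n) 1 SD) (bits_block n)"
    unfolding bits_block_def grid_hcat by (rule grid_eqI) (simp_all add: binrow_def nth_Cons')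
  finally show ?thesis .
qed

definition shiftbin_entry :: "nat \<Rightarrow> nat \<Rightarrow> nat \<Rightarrow> sym" where
  "shiftbin_entry n r c =
     (let j = c div (n + 2); t = c mod (n + 2) in
      if j \<le> r \<and> r < j + 2 ^ n then binrow n (r - j) ! t else S0)"

lemma ShiftBin_grid: "ShiftBin n = grid (2 ^ n + 2 ^ n) (2 ^ n * (n + 2)) (shiftbin_entry n)"
  by (simp add: ShiftBin_def grid_def shiftbin_entry_def mult_2)

lemma shiftbin_entry_shift: "shiftbin_entry n (r + j) (c + j * (n + 2)) = shiftbin_entry n r c"
proof -
  have "(c + j * (n + 2)) div (n + 2) = c div (n + 2) + j"
    by (subst div_mult_self1) simp_all
  moreover have "(c + j * (n + 2)) mod (n + 2) = c mod (n + 2)"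
    by (rule mod_mult_self1)
  ultimately show ?thesis
    unfolding shiftbin_entry_def Let_def by simp
qed

lemma shiftbin_entry_below:
  assumes "c < j * (n + 2)" "2 ^ n + j \<le> r"
  shows "shiftbin_entry n r c = S0"
proof -
  from assms(1) have "c div (n + 2) < j"
    by (rule less_mult_imp_div_less)
  with assms(2) show ?thesis
    unfolding shiftbin_entry_def Let_def by simp
qed

lemma shiftbin_entry_above:
  assumes "j * (n + 2) \<le> c" "r < j"
  shows "shiftbin_entry n r c = S0"
proof -
  from assms(1) have "j \<le> c div (n + 2)"
    by (simp add: less_eq_div_iff_mult_less_eq)
  with assms(2) show ?thesis
    unfolding shiftbin_entry_def Let_def by simp
qed

definition shiftbin_part :: "nat \<Rightarrow> nat \<Rightarrow> str2d" where
  "shiftbin_part n k = grid (2 ^ n + 2 ^ k) (2 ^ k * (n + 2)) (shiftbin_entry n)"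

definition zero_block :: "nat \<Rightarrow> nat \<Rightarrow> str2d" where
  "zero_block n k = const_grid (2 ^ k) (2 ^ k * (n + 2)) S0"

lemma ShiftBin_eq_shiftbin_part: "ShiftBin n = shiftbin_part n n"
  by (simp add: ShiftBin_grid shiftbin_part_def)

lemma shiftbin_part_0: "shiftbin_part n 0 = Bin n @ zero_block n 0"
  unfolding shiftbin_part_def zero_block_def Bin_grid power_0 mult_1 grid_vcat
  by (rule grid_eqI) (simp_all add: shiftbin_entry_def)

lemma zero_block_Suc:
  "zero_block n (Suc k) =
     map2 (@) (zero_block n k) (zero_block n k) @ map2 (@) (zero_block n k) (zero_block n k)"
  unfolding zero_block_def const_grid_hcat const_grid_vcat
  by (rule grid_eqI) (simp_all add: algebra_simps)

lemma shiftbin_part_Suc: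
  "shiftbin_part n (Suc k) =
     map2 (@) (shiftbin_part n k @ zero_block n k) (zero_block n k @ shiftbin_part n k)"
proof -
  define w where "w = 2 ^ k * (n + 2)"
  have left: "shiftbin_part n k @ zero_block n k =
      grid (2 ^ n + 2 ^ Suc k) w (\<lambda>r c. if r < 2 ^ n + 2 ^ k then shiftbin_entry n r c else S0)"
    unfolding shiftbin_part_def zero_block_def grid_vcat w_def by (rule grid_eqI) simp_all
  have right: "zero_block n k @ shiftbin_part n k =
      grid (2 ^ n + 2 ^ Suc k) w (\<lambda>r c. if r < 2 ^ k then S0 else shiftbin_entry n (r - 2 ^ k) c)"
    unfolding shiftbin_part_def zero_block_def grid_vcat w_def by (rule grid_eqI) simp_all
  have entry: "shiftbin_entry n r c =
      (if c < w then if r < 2 ^ n + 2 ^ k then shiftbin_entry n r c else S0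
       else if r < 2 ^ k then S0 else shiftbin_entry n (r - 2 ^ k) (c - w))" for r c
  proof -
    have "shiftbin_entry n r c = shiftbin_entry n (r - 2 ^ k) (c - w)" if "w \<le> c" "2 ^ k \<le> r"
      using shiftbin_entry_shift[of n "r - 2 ^ k" "2 ^ k" "c - w"] that by (simp add: w_def)
    then show ?thesis
      using shiftbin_entry_below[of c "2 ^ k" n r] shiftbin_entry_above[of "2 ^ k" n c r]
      by (auto simp: w_def)
  qed
  show ?thesis
    unfolding left right grid_hcat
    by (subst shiftbin_part_def, rule grid_eqI[OF _ _ entry]) (simp_all add: w_def)
qed

lemma builds_const_row: "builds {} (1 + 2 * m) {const_grid 1 (Suc m) s}"
proof -
  have "builds {} 1 (insert [[s]] {})"
    by (rule builds_leaf)
  then have "builds {} 1 {const_grid 1 (Suc 0) s}"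
    by (rule builds_mono) (simp_all add: grid_def)
  also have "builds {const_grid 1 (Suc 0) s} (2 * m) {const_grid 1 (Suc m) s}"
  proof (rule builds_iterate[where P = "\<lambda>m. {const_grid 1 (Suc m) s}"])
    fix k
    have "builds {const_grid 1 (Suc k) s} 1 (insert [[s]] {const_grid 1 (Suc k) s})"
      by (rule builds_leaf)
    also have "builds \<dots> 1 (insert (map2 (@) (const_grid 1 (Suc k) s) [[s]]) \<dots>)"
      by (rule builds_hcat) simp_all
    finally show "builds {const_grid 1 (Suc k) s} 2 {const_grid 1 (Suc (Suc k)) s}"
      by (rule builds_mono) (auto simp: grid_def)
  qed
  finally show ?thesis .
qed

definition bits_stage :: "nat \<Rightarrow> str2d set" where
  "bits_stage k =
     {const_grid (2 ^ k) 1 S0, const_grid (2 ^ k) 1 S1, const_grid (2 ^ k) 1 SD, bits_block k}"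

lemma builds_bits_stage_Suc: "builds (bits_stage k) 6 (bits_stage (Suc k))"
proof -
  let ?C = "\<lambda>s. const_grid (2 ^ k) 1 s"
  have "builds (bits_stage k) 1 (insert (?C S0 @ ?C S0) (bits_stage k))"
    by (rule builds_vcat) (simp_all add: bits_stage_def)
  also have "builds \<dots> 1 (insert (?C S1 @ ?C S1) \<dots>)"
    by (rule builds_vcat) (simp_all add: bits_stage_def)
  also have "builds \<dots> 1 (insert (?C SD @ ?C SD) \<dots>)"
    by (rule builds_vcat) (simp_all add: bits_stage_def)
  also have "builds \<dots> 1 (insert (map2 (@) (?C S0) (bits_block k)) \<dots>)"
    by (rule builds_hcat) (simp_all add: bits_stage_def bits_block_def)
  also have "builds \<dots> 1 (insert (map2 (@) (?C S1) (bits_block k)) \<dots>)"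
    by (rule builds_hcat) (simp_all add: bits_stage_def bits_block_def)
  also have "builds \<dots> 1
      (insert (map2 (@) (?C S0) (bits_block k) @ map2 (@) (?C S1) (bits_block k)) \<dots>)"
    by (rule builds_vcat) (simp_all add: bits_block_def grid_hcat)
  finally show ?thesis
    by (rule builds_mono) (auto simp: bits_stage_def bits_block_Suc const_grid_vcat mult_2)
qed

lemma builds_bits_stage: "builds {} (3 + 6 * k) (bits_stage k)"
proof -
  have "builds {} 1 (insert [[S0]] {})"
    by (rule builds_leaf)
  also have "builds \<dots> 1 (insert [[S1]] \<dots>)"
    by (rule builds_leaf)
  also have "builds \<dots> 1 (insert [[SD]] \<dots>)"
    by (rule builds_leaf)
  finally have "builds {} 3 (bits_stage 0)"
    by (rule builds_mono) (auto simp: bits_stage_def bits_block_0 grid_def)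
  also have "builds (bits_stage 0) (6 * k) (bits_stage k)"
    using builds_bits_stage_Suc by (rule builds_iterate)
  finally show ?thesis .
qed

lemma builds_Bin: "builds {} (4 + 6 * n) {Bin n}"
proof -
  have "builds {} (3 + 6 * n) (bits_stage n)"
    by (rule builds_bits_stage)
  also have "builds \<dots> 1 (insert (map2 (@) (const_grid (2 ^ n) 1 SD) (bits_block n)) \<dots>)"
    by (rule builds_hcat) (simp_all add: bits_stage_def bits_block_def)
  finally show ?thesis
    by (rule builds_mono) (simp_all add: Bin_eq_hcat)
qed

definition shiftbin_stage :: "nat \<Rightarrow> nat \<Rightarrow> str2d set" where
  "shiftbin_stage n k = {shiftbin_part n k, zero_block n k}"

lemma builds_shiftbin_stage_Suc: "builds (shiftbin_stage n k) 5 (shiftbin_stage n (Suc k))"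
proof -
  let ?X = "shiftbin_part n k" and ?Z = "zero_block n k"
  have "builds (shiftbin_stage n k) 1 (insert (?X @ ?Z) (shiftbin_stage n k))"
    by (rule builds_vcat) (simp_all add: shiftbin_stage_def shiftbin_part_def zero_block_def)
  also have "builds \<dots> 1 (insert (?Z @ ?X) \<dots>)"
    by (rule builds_vcat) (simp_all add: shiftbin_stage_def shiftbin_part_def zero_block_def)
  also have "builds \<dots> 1 (insert (map2 (@) (?X @ ?Z) (?Z @ ?X)) \<dots>)"
    by (rule builds_hcat) simp_all
  also have "builds \<dots> 1 (insert (map2 (@) ?Z ?Z) \<dots>)"
    by (rule builds_hcat) (simp_all add: shiftbin_stage_def)
  also have "builds \<dots> 1 (insert (map2 (@) ?Z ?Z @ map2 (@) ?Z ?Z) \<dots>)"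
    by (rule builds_vcat) simp_all
  finally show ?thesis
    by (rule builds_mono) (auto simp: shiftbin_stage_def shiftbin_part_Suc zero_block_Suc)
qed

lemma builds_ShiftBin: "builds {} (8 + 13 * n) {ShiftBin n}"
proof -
  have "builds {} (1 + 2 * Suc n) {zero_block n 0}"
    using builds_const_row[of "Suc n" S0] by (simp add: zero_block_def)
  from builds_par[OF this builds_Bin[of n]]
  have "builds {} (7 + 8 * n) {zero_block n 0, Bin n}"
    by (rule builds_mono) auto
  also have "builds \<dots> 1 (insert (Bin n @ zero_block n 0) \<dots>)"
    by (rule builds_vcat) (simp_all add: Bin_grid zero_block_def)
  also have "builds \<dots> (5 * n) (shiftbin_stage n n)"
  proof -
    have "builds (shiftbin_stage n 0) (5 * n) (shiftbin_stage n n)"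
      using builds_shiftbin_stage_Suc by (rule builds_iterate)
    then show ?thesis
      by (rule builds_mono) (auto simp: shiftbin_stage_def shiftbin_part_0)
  qed
  finally show ?thesis
    by (rule builds_mono) (simp_all add: shiftbin_stage_def ShiftBin_eq_shiftbin_part)
qed

theorem mainTheorem5:
  shows "\<exists>c::real > 0. \<forall>n::nat \<ge> 1. \<exists>rs S. S < length rs \<and>
           expand rs S = Some (ShiftBin n) \<and> real (length rs) \<le> c * real n"
proof (intro exI[of _ 21] conjI allI impI)
  fix n :: nat
  assume "1 \<le> n"
  obtain rs S where "S < length rs" "expand rs S = Some (ShiftBin n)" "length rs \<le> 8 + 13 * n"
    using builds_ShiftBin by (rule builds_from_empty)
  moreover from \<open>1 \<le> n\<close> have "real (8 + 13 * n) \<le> 21 * real n"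
    by simp
  ultimately show "\<exists>rs S. S < length rs \<and> expand rs S = Some (ShiftBin n) \<and>
      real (length rs) \<le> 21 * real n"
    by (meson of_nat_le_iff order_trans)
qed simp

end
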